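(* Let $\Xi$, $x_0=1-x_1-x_2$, $F_\beta$, $\beta_3$, $p_\beta$ be as in the context, let $\beta_1=2$, and for $\beta>\beta_3$ let $h_\beta=F_\beta(p_\beta,p_\beta)$ (which equals $F_\beta(1-2p_\beta,p_\beta)=F_\beta(p_\beta,1-2p_\beta)$). Then there exists $\beta_2\in(\beta_3,\beta_1)$ such that $h_\beta>0$ for $\beta\in(\beta_3,\beta_2)$, $h_{\beta_2}=0$, and $h_\beta<0$ for $\beta\in(\beta_2,\beta_1)$.
   Context: $\Xi=\{(x_1,x_2): x_1,x_2\ge0,\ x_1+x_2\le1\}$, $x_0=1-x_1-x_2$, and $F_\beta(\mathbf{x})=-\frac12|\sum_{k=0}^2x_k\mathbf{v}_k|^2+\frac1\beta\sum_{k=0}^2x_k\log(3x_k)$ with $\mathbf{v}_k=(\cos(2\pi k/3),\sin(2\pi k/3))$; note $F_\beta(1/3,1/3)=0$. Define $f_0(t)=\frac{2}{3(1-3t)}\log\frac{1-2t}{t}$ for $t\in(0,1/2)\setminus\{1/3\}$, $f_0(1/3)=2$; $m_0$ is the minimizer of $f_0$ and $\beta_3=f_0(m_0)$. For $\beta>\beta_3$, $p_\beta$ is the smaller of the two solutions of $f_0(t)=\beta$ in $(0,1/2)$ (so $p_\beta<m_0$). *)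

theory Defs
  imports Complex_Main
begin

definition vx :: "nat \<Rightarrow> real" where "vx k = cos (2 * pi * real k / 3)"
definition vy :: "nat \<Rightarrow> real" where "vy k = sin (2 * pi * real k / 3)"

definition bary :: "real \<Rightarrow> real \<Rightarrow> nat \<Rightarrow> real" where
  "bary x1 x2 k = (if k = 0 then 1 - x1 - x2 else if k = 1 then x1 else x2)"

definition Fbeta :: "real \<Rightarrow> real \<Rightarrow> real \<Rightarrow> real" where
  "Fbeta \<beta> x1 x2 =
     - (1/2) * ((\<Sum>k\<le>2. bary x1 x2 k * vx k)\<^sup>2 + (\<Sum>k\<le>2. bary x1 x2 k * vy k)\<^sup>2)
     + (1/\<beta>) * (\<Sum>k\<le>2. bary x1 x2 k * ln (3 * bary x1 x2 k))"

definition f0 :: "real \<Rightarrow> real" where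
  "f0 t = (if t = 1/3 then 2 else 2 / (3 * (1 - 3*t)) * ln ((1 - 2*t) / t))"

definition m0 :: real where
  "m0 = (THE m. 0 < m \<and> m < 1/2 \<and> (\<forall>t. 0 < t \<and> t < 1/2 \<longrightarrow> f0 m \<le> f0 t))"

definition beta3 :: real where "beta3 = f0 m0"

definition beta1 :: real where "beta1 = 2"

definition pbeta :: "real \<Rightarrow> real" where
  "pbeta \<beta> = (LEAST t. 0 < t \<and> t < 1/2 \<and> f0 t = \<beta>)"

definition hbeta :: "real \<Rightarrow> real" where
  "hbeta \<beta> = Fbeta \<beta> (pbeta \<beta>) (pbeta \<beta>)"

end

theory Submission
  imports Defs
begin

text \<open>
  Off \<open>t = 1/3\<close>, \<open>f\<^sub>0 = f0_branch = 2 L / (3(1 - 3t))\<close> with \<open>L = log_ratio = ln((1-2t)/t)\<close>, and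
  \<open>f\<^sub>0' = (2/3) N / (1-3t)\<^sup>2\<close> with \<open>N = slope_numer = 3L - (1-3t)/(t(1-2t))\<close>. \<open>N\<close> increases
  on \<open>(0,1/4]\<close>, decreases on \<open>[1/4,1/3]\<close>, vanishes at \<open>1/3\<close> and is negative at \<open>1/6\<close>, so it
  changes sign exactly once below \<open>1/3\<close>, at some \<open>m \<in> (1/6,1/4)\<close>; since \<open>f\<^sub>0 \<ge> 2 > f\<^sub>0(m)\<close> on
  \<open>[1/3,1/2)\<close>, this \<open>m\<close> is \<open>m\<^sub>0\<close>, and \<open>p\<^sub>\<beta>\<close> inverts the decreasing branch \<open>f\<^sub>0|(0,m\<^sub>0]\<close>.
  Substituting \<open>\<beta> = f\<^sub>0(p)\<close> into the quadratic term of \<open>F\<^sub>\<beta>(p,p)\<close> gives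
  \<open>\<beta> h\<^sub>\<beta> = G(p)\<close> with \<open>G = h_numer = ln 3 + (2/3 - p) ln(1-2p) + (1/3 + p) ln p\<close>; as
  \<open>G' = -N/3 > 0\<close> on \<open>(0,m\<^sub>0)\<close> and \<open>G(1/6) = 0\<close>, \<open>h\<^sub>\<beta>\<close> has the sign of \<open>p\<^sub>\<beta> - 1/6\<close>, i.e. of
  \<open>\<beta>\<^sub>2 - \<beta>\<close> for \<open>\<beta>\<^sub>2 = f\<^sub>0(1/6) = (8/3) ln 2\<close>.
\<close>

lemma DERIV_pos_interior_imp_increasing:
  fixes f f' :: "real \<Rightarrow> real"
  assumes "a < b"
    and "\<And>x. a \<le> x \<Longrightarrow> x \<le> b \<Longrightarrow> (f has_real_derivative f' x) (at x)"
    and "\<And>x. a < x \<Longrightarrow> x < b \<Longrightarrow> 0 < f' x"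
  shows "f a < f b"
proof (rule DERIV_pos_imp_increasing_open[OF \<open>a < b\<close>])
  show "continuous_on {a..b} f"
    using assms(2) by (intro DERIV_atLeastAtMost_imp_continuous_on) blast
qed (use assms less_imp_le in blast)

lemma DERIV_neg_interior_imp_decreasing:
  fixes f f' :: "real \<Rightarrow> real"
  assumes "a < b"
    and "\<And>x. a \<le> x \<Longrightarrow> x \<le> b \<Longrightarrow> (f has_real_derivative f' x) (at x)"
    and "\<And>x. a < x \<Longrightarrow> x < b \<Longrightarrow> f' x < 0"
  shows "f b < f a"
proof (rule DERIV_neg_imp_decreasing_open[OF \<open>a < b\<close>])
  show "continuous_on {a..b} f"
    using assms(2) by (intro DERIV_atLeastAtMost_imp_continuous_on) blast
qed (use assms less_imp_le in blast)

lemma sgn_diff_strict_mono_on: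
  fixes f :: "'a::linordered_idom \<Rightarrow> 'a"
  assumes "strict_mono_on S f" "x \<in> S" "y \<in> S"
  shows "sgn (f x - f y) = sgn (x - y)"
  using assms monotone_onD[OF assms(1), of x y] monotone_onD[OF assms(1), of y x]
  by (cases x y rule: linorder_cases) auto

lemma sgn_diff_strict_antimono_on:
  fixes f :: "'a::linordered_idom \<Rightarrow> 'a"
  assumes "strict_antimono_on S f" "x \<in> S" "y \<in> S"
  shows "sgn (f y - f x) = sgn (x - y)"
  using assms monotone_onD[OF assms(1), of x y] monotone_onD[OF assms(1), of y x]
  by (cases x y rule: linorder_cases) auto

lemma ln_ge_one_minus_inverse:
  fixes x :: real
  assumes "0 < x"
  shows "1 - 1/x \<le> ln x"
  using ln_le_minus_one[of "1/x"] assms by (simp add: ln_div)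

lemma ln2_less_3_4: "ln (2::real) < 3/4"
proof -
  have "(2::real) < 1 + 3/4 + (3/4)^2/2" by (simp add: power2_eq_square)
  also have "\<dots> \<le> exp (3/4)" by (rule exp_lower_Taylor_quadratic) simp
  finally show ?thesis by (simp add: ln_less_cancel_iff[symmetric, of 2 "exp (3/4)"])
qed

lemma ln2_greater_2_3: "ln (2::real) > 2/3"
proof -
  have "ln ((15/14::real)^10) < ln 2" by (subst ln_less_cancel_iff) (simp_all add: power_divide)
  then have "10 * ln (15/14::real) < ln 2" by (simp add: ln_realpow)
  moreover have "1/15 \<le> ln (15/14::real)"
    using ln_ge_one_minus_inverse[of "15/14"] by simp
  ultimately show ?thesis by simp
qed

definition log_ratio :: "real \<Rightarrow> real" where
  "log_ratio t = ln (1 - 2*t) - ln t"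

definition f0_branch :: "real \<Rightarrow> real" where
  "f0_branch t = 2 / (3 * (1 - 3*t)) * log_ratio t"

definition slope_numer :: "real \<Rightarrow> real" where
  "slope_numer t = 3 * log_ratio t - (1 - 3*t) / (t * (1 - 2*t))"

definition h_numer :: "real \<Rightarrow> real" where
  "h_numer t = ln 3 + (2/3 - t) * ln (1 - 2*t) + (1/3 + t) * ln t"

lemma log_ratio_eq: "0 < t \<Longrightarrow> t < 1/2 \<Longrightarrow> log_ratio t = ln ((1 - 2*t) / t)"
  unfolding log_ratio_def by (simp add: ln_div)

lemma f0_eq_f0_branch: "t \<noteq> 1/3 \<Longrightarrow> 0 < t \<Longrightarrow> t < 1/2 \<Longrightarrow> f0 t = f0_branch t"
  unfolding f0_def f0_branch_def by (simp add: log_ratio_eq)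

lemma has_derivative_slope_numer:
  assumes "0 < x" "x < 1/2"
  shows "(slope_numer has_real_derivative ((3*x - 1) * (4*x - 1) / (x * (1 - 2*x))\<^sup>2)) (at x)"
proof -
  have nz: "1 - 2*x \<noteq> 0" "x \<noteq> 0" using assms by auto
  show ?thesis unfolding slope_numer_def log_ratio_def using assms
    by (auto intro!: derivative_eq_intros)
      (use nz in \<open>simp add: divide_simps power2_eq_square, simp add: algebra_simps\<close>)
qed

lemma has_derivative_f0_branch:
  assumes "0 < x" "x < 1/2" "x \<noteq> 1/3"
  shows "(f0_branch has_real_derivative (2/3 * slope_numer x / (1 - 3*x)\<^sup>2)) (at x)"
proof -
  have nz: "1 - 2*x \<noteq> 0" "x \<noteq> 0" "1 - 3*x \<noteq> 0" using assms by auto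
  show ?thesis unfolding f0_branch_def log_ratio_def using assms
    by (auto intro!: derivative_eq_intros)
      (use nz in \<open>simp add: slope_numer_def log_ratio_def divide_simps power2_eq_square,
        simp add: algebra_simps\<close>)
qed

lemma has_derivative_h_numer:
  assumes "0 < x" "x < 1/2"
  shows "(h_numer has_real_derivative (- slope_numer x / 3)) (at x)"
proof -
  have nz: "1 - 2*x \<noteq> 0" "x \<noteq> 0" using assms by auto
  show ?thesis unfolding h_numer_def using assms
    by (auto intro!: derivative_eq_intros)
      (use nz in \<open>simp add: slope_numer_def log_ratio_def field_simps\<close>)
qed

subsection \<open>The sign of the slope numerator\<close>

lemma slope_numer_increasing:
  assumes "0 < a" "a < b" "b \<le> 1/4"
  shows "slope_numer a < slope_numer b"
proof (rule DERIV_pos_interior_imp_increasing[OF \<open>a < b\<close>])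
  fix x
  show "(slope_numer has_real_derivative ((3*x - 1) * (4*x - 1) / (x * (1 - 2*x))\<^sup>2)) (at x)"
    if "a \<le> x" "x \<le> b" using that assms by (intro has_derivative_slope_numer) auto
  show "0 < (3*x - 1) * (4*x - 1) / (x * (1 - 2*x))\<^sup>2" if "a < x" "x < b"
    using that assms by (intro divide_pos_pos mult_neg_neg) auto
qed

lemma slope_numer_decreasing:
  assumes "1/4 \<le> a" "a < b" "b \<le> 1/3"
  shows "slope_numer b < slope_numer a"
proof (rule DERIV_neg_interior_imp_decreasing[OF \<open>a < b\<close>])
  fix x
  show "(slope_numer has_real_derivative ((3*x - 1) * (4*x - 1) / (x * (1 - 2*x))\<^sup>2)) (at x)"
    if "a \<le> x" "x \<le> b" using that assms by (intro has_derivative_slope_numer) auto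
  show "(3*x - 1) * (4*x - 1) / (x * (1 - 2*x))\<^sup>2 < 0" if "a < x" "x < b"
    using that assms by (intro divide_neg_pos mult_neg_pos) auto
qed

lemma slope_numer_sign_change:
  obtains m where "1/6 < m" "m < 1/4"
    "\<And>x. 0 < x \<Longrightarrow> x < m \<Longrightarrow> slope_numer x < 0"
    "\<And>x. m < x \<Longrightarrow> x < 1/3 \<Longrightarrow> 0 < slope_numer x"
proof -
  have "log_ratio (1/6) = ln (2^2)" by (simp add: log_ratio_eq)
  also have "\<dots> = 2 * ln 2" by (subst ln_realpow) simp_all
  finally have at_1_6: "slope_numer (1/6) < 0"
    unfolding slope_numer_def using ln2_less_3_4 by simp
  have "log_ratio (1/4) = ln 2" by (simp add: log_ratio_eq)
  then have at_1_4: "0 < slope_numer (1/4)"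
    unfolding slope_numer_def using ln2_greater_2_3 by simp
  have at_1_3: "slope_numer (1/3) = 0"
    unfolding slope_numer_def log_ratio_def by simp
  have "continuous_on {1/6..1/4} slope_numer"
    by (rule DERIV_atLeastAtMost_imp_continuous_on) (use has_derivative_slope_numer in force)
  then obtain m where m: "1/6 \<le> m" "m \<le> 1/4" "slope_numer m = 0"
    using IVT'[of slope_numer "1/6" 0 "1/4"] at_1_6 at_1_4 by auto
  moreover have "m \<noteq> 1/6" "m \<noteq> 1/4" using m(3) at_1_6 at_1_4 by (metis less_irrefl)+
  ultimately have "1/6 < m" "m < 1/4" by auto
  show ?thesis
  proof
    show "slope_numer x < 0" if "0 < x" "x < m" for x
      using slope_numer_increasing[of x m] that m \<open>m < 1/4\<close> by simp
    show "0 < slope_numer x" if "m < x" "x < 1/3" for x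
    proof (cases "x \<le> 1/4")
      case True
      then show ?thesis using slope_numer_increasing[of m x] that m \<open>1/6 < m\<close> by simp
    next
      case False
      then show ?thesis using slope_numer_decreasing[of x "1/3"] that at_1_3 by simp
    qed
  qed fact+
qed

lemma f0_branch_decreasing:
  assumes "0 < a" "a < b" "b < 1/3" "\<And>x. a < x \<Longrightarrow> x < b \<Longrightarrow> slope_numer x < 0"
  shows "f0_branch b < f0_branch a"
proof (rule DERIV_neg_interior_imp_decreasing[OF \<open>a < b\<close>])
  fix x
  show "(f0_branch has_real_derivative (2/3 * slope_numer x / (1 - 3*x)\<^sup>2)) (at x)"
    if "a \<le> x" "x \<le> b" using that assms(1,3) by (intro has_derivative_f0_branch) auto
  show "2/3 * slope_numer x / (1 - 3*x)\<^sup>2 < 0" if "a < x" "x < b"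
    using that assms by (intro divide_neg_pos) auto
qed

lemma f0_branch_increasing:
  assumes "0 < a" "a < b" "b < 1/3" "\<And>x. a < x \<Longrightarrow> x < b \<Longrightarrow> 0 < slope_numer x"
  shows "f0_branch a < f0_branch b"
proof (rule DERIV_pos_interior_imp_increasing[OF \<open>a < b\<close>])
  fix x
  show "(f0_branch has_real_derivative (2/3 * slope_numer x / (1 - 3*x)\<^sup>2)) (at x)"
    if "a \<le> x" "x \<le> b" using that assms(1,3) by (intro has_derivative_f0_branch) auto
  show "0 < 2/3 * slope_numer x / (1 - 3*x)\<^sup>2" if "a < x" "x < b"
    using that assms by (intro divide_pos_pos) auto
qed

lemma h_numer_increasing:
  assumes "0 < a" "a < b" "b < 1/2" "\<And>x. a < x \<Longrightarrow> x < b \<Longrightarrow> slope_numer x < 0"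
  shows "h_numer a < h_numer b"
proof (rule DERIV_pos_interior_imp_increasing[OF \<open>a < b\<close>])
  fix x
  show "(h_numer has_real_derivative (- slope_numer x / 3)) (at x)"
    if "a \<le> x" "x \<le> b" using that assms(1,3) by (intro has_derivative_h_numer) auto
  show "0 < - slope_numer x / 3" if "a < x" "x < b"
    using that assms by simp
qed

lemma log_ratio_less_beyond_1_3:
  assumes "1/3 < t" "t < 1/2"
  shows "log_ratio t < 3 * (1 - 3*t)"
proof -
  let ?\<phi> = "\<lambda>x. log_ratio x - 3 * (1 - 3*x)"
  have "?\<phi> t < ?\<phi> (1/3)"
  proof (rule DERIV_neg_interior_imp_decreasing[OF \<open>1/3 < t\<close>])
    fix x
    show "(?\<phi> has_real_derivative (- (6*x - 1) * (3*x - 1) / (x * (1 - 2*x)))) (at x)"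
      if "1/3 \<le> x" "x \<le> t"
    proof -
      have nz: "1 - 2*x \<noteq> 0" "x \<noteq> 0" using that assms by auto
      show ?thesis unfolding log_ratio_def using that assms
        by (auto intro!: derivative_eq_intros) (use nz in \<open>simp add: field_simps\<close>)
    qed
    show "- (6*x - 1) * (3*x - 1) / (x * (1 - 2*x)) < 0" if "1/3 < x" "x < t"
      using that assms by (intro divide_neg_pos mult_neg_pos) auto
  qed
  then show ?thesis by (simp add: log_ratio_def)
qed

lemma f0_branch_gt_2_beyond_1_3:
  assumes "1/3 < t" "t < 1/2"
  shows "2 < f0_branch t"
proof -
  have "3 < log_ratio t / (1 - 3*t)"
    using log_ratio_less_beyond_1_3[OF assms] assms by (simp add: less_divide_eq)
  moreover have "f0_branch t = 2/3 * (log_ratio t / (1 - 3*t))" unfolding f0_branch_def by simp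
  ultimately show ?thesis by linarith
qed

lemma f0_branch_1_6: "f0_branch (1/6) = 8/3 * ln 2"
proof -
  have "log_ratio (1/6) = ln (2^2)" by (simp add: log_ratio_eq)
  also have "\<dots> = 2 * ln 2" by (subst ln_realpow) simp_all
  finally show ?thesis unfolding f0_branch_def by simp
qed

lemma f0_branch_1_66_gt_2: "2 < f0_branch (1/66)"
proof -
  have "log_ratio (1/66) = ln (2^6)" by (simp add: log_ratio_eq)
  also have "\<dots> = 6 * ln 2" by (subst ln_realpow) simp_all
  finally show ?thesis unfolding f0_branch_def using ln2_greater_2_3 by simp
qed

subsection \<open>The minimiser \<open>m\<^sub>0\<close>\<close>

lemma f0_strict_min_at_sign_change:
  assumes m: "1/6 < m" "m < 1/4"
    and below: "\<And>x. 0 < x \<Longrightarrow> x < m \<Longrightarrow> slope_numer x < 0"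
    and above: "\<And>x. m < x \<Longrightarrow> x < 1/3 \<Longrightarrow> 0 < slope_numer x"
    and t: "0 < t" "t < 1/2" "t \<noteq> m"
  shows "f0 m < f0 t"
proof -
  have f0_m: "f0 m = f0_branch m" using m by (intro f0_eq_f0_branch) auto
  have "f0_branch m < f0_branch (1/6)"
    using f0_branch_decreasing[of "1/6" m] m below by simp
  then have below_2: "f0_branch m < 2" using f0_branch_1_6 ln2_less_3_4 by simp
  consider "t < m" | "m < t" "t < 1/3" | "t = 1/3" | "1/3 < t" using t by linarith
  then show ?thesis
  proof cases
    case 1
    then show ?thesis using f0_branch_decreasing[of t m] f0_eq_f0_branch[of t] f0_m t m below by simp
  next
    case 2
    then show ?thesis using f0_branch_increasing[of m t] f0_eq_f0_branch[of t] f0_m t m above by simp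
  next
    case 3
    then show ?thesis using f0_m below_2 by (simp add: f0_def)
  next
    case 4
    then show ?thesis using f0_branch_gt_2_beyond_1_3[of t] f0_eq_f0_branch[of t] f0_m t below_2 by simp
  qed
qed

lemma m0_eq_sign_change:
  assumes "1/6 < m" "m < 1/4"
    and "\<And>x. 0 < x \<Longrightarrow> x < m \<Longrightarrow> slope_numer x < 0"
    and "\<And>x. m < x \<Longrightarrow> x < 1/3 \<Longrightarrow> 0 < slope_numer x"
  shows "m0 = m"
  unfolding m0_def
proof (rule the_equality)
  have strict_min: "f0 m < f0 t" if "0 < t" "t < 1/2" "t \<noteq> m" for t
    using assms that by (rule f0_strict_min_at_sign_change)
  show "0 < m \<and> m < 1/2 \<and> (\<forall>t. 0 < t \<and> t < 1/2 \<longrightarrow> f0 m \<le> f0 t)"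
    using assms(1,2) strict_min by (auto simp: order_le_less)
  show "m' = m" if min': "0 < m' \<and> m' < 1/2 \<and> (\<forall>t. 0 < t \<and> t < 1/2 \<longrightarrow> f0 m' \<le> f0 t)" for m'
  proof (rule ccontr)
    assume "m' \<noteq> m"
    then have "f0 m < f0 m'" using min' strict_min by blast
    moreover have "f0 m' \<le> f0 m" using min' assms(1,2) by auto
    ultimately show False by simp
  qed
qed

lemma m0_bounds: "1/6 < m0" "m0 < 1/4"
  by (metis slope_numer_sign_change m0_eq_sign_change)+

lemma slope_numer_neg_below_m0: "0 < x \<Longrightarrow> x < m0 \<Longrightarrow> slope_numer x < 0"
  by (metis slope_numer_sign_change m0_eq_sign_change)

lemma beta3_eq: "beta3 = f0_branch m0"
  unfolding beta3_def using m0_bounds by (intro f0_eq_f0_branch) auto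

lemma f0_branch_strict_antimono: "strict_antimono_on {0<..m0} f0_branch"
proof (rule monotone_onI)
  fix a b assume "a \<in> {0<..m0}" "b \<in> {0<..m0}" "a < b"
  then show "f0_branch b < f0_branch a"
    using m0_bounds slope_numer_neg_below_m0 by (intro f0_branch_decreasing) auto
qed

lemma h_numer_strict_mono: "strict_mono_on {0<..m0} h_numer"
proof (rule monotone_onI)
  fix a b assume "a \<in> {0<..m0}" "b \<in> {0<..m0}" "a < b"
  then show "h_numer a < h_numer b"
    using m0_bounds slope_numer_neg_below_m0 by (intro h_numer_increasing) auto
qed

lemma pbeta_f0_branch:
  assumes "0 < t" "t \<le> m0"
  shows "pbeta (f0_branch t) = t"
  unfolding pbeta_def
proof (rule Least_equality)
  show "0 < t \<and> t < 1/2 \<and> f0 t = f0_branch t"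
    using assms m0_bounds f0_eq_f0_branch[of t] by auto
  show "t \<le> y" if y: "0 < y \<and> y < 1/2 \<and> f0 y = f0_branch t" for y
  proof (rule ccontr)
    assume "\<not> t \<le> y"
    then have "f0_branch t < f0_branch y"
      using monotone_onD[OF f0_branch_strict_antimono, of y t] y assms by auto
    moreover have "f0 y = f0_branch y"
      using y \<open>\<not> t \<le> y\<close> assms m0_bounds by (intro f0_eq_f0_branch) auto
    ultimately show False using y by simp
  qed
qed

lemma f0_branch_onto:
  assumes "beta3 < \<beta>" "\<beta> \<le> 2"
  obtains t where "0 < t" "t < m0" "f0_branch t = \<beta>"
proof -
  have "continuous_on {1/66..m0} f0_branch"
    using m0_bounds has_derivative_f0_branch
    by (intro DERIV_atLeastAtMost_imp_continuous_on) force
  then obtain t where t: "1/66 \<le> t" "t \<le> m0" "f0_branch t = \<beta>"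
    using IVT2'[of f0_branch m0 \<beta> "1/66"] assms beta3_eq f0_branch_1_66_gt_2 m0_bounds by auto
  moreover have "t \<noteq> m0" using t assms beta3_eq by auto
  ultimately show ?thesis by (intro that[of t]) auto
qed

lemma f0_branch_pos: "0 < t \<Longrightarrow> t < 1/3 \<Longrightarrow> 0 < f0_branch t"
  unfolding f0_branch_def by (simp add: log_ratio_eq)

subsection \<open>The free energy on the diagonal\<close>

lemma vertex_coordinates: "vx 0 = 1" "vx 1 = -1/2" "vx 2 = -1/2" "vy 0 = 0" "vy 2 = - vy 1"
proof -
  have "2 * pi * real (2::nat) / 3 = pi/3 + pi" by simp
  then have v2: "vx 2 = - cos (pi/3)" "vy 2 = - sin (pi/3)"
    unfolding vx_def vy_def by (simp_all only: cos_periodic_pi sin_periodic_pi)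
  have "sin (pi/3) = sin (2 * pi * real (1::nat) / 3)"
    by (subst sin_pi_minus[symmetric]) simp
  with v2 show "vx 0 = 1" "vx 1 = -1/2" "vx 2 = -1/2" "vy 0 = 0" "vy 2 = - vy 1"
    unfolding vx_def vy_def by (simp_all add: cos_120 cos_60)
qed

lemma Fbeta_diagonal:
  "Fbeta \<beta> p p = - (1/2) * (1 - 3*p)\<^sup>2 + (1/\<beta>) * ((1 - 2*p) * ln (3 * (1 - 2*p)) + 2*p * ln (3*p))"
proof -
  have "{..2::nat} = {0, 1, 2}" by auto
  then show ?thesis unfolding Fbeta_def using vertex_coordinates
    by (simp add: bary_def algebra_simps power2_eq_square)
qed

lemma hbeta_f0_branch:
  assumes "0 < p" "p \<le> m0"
  shows "hbeta (f0_branch p) = h_numer p / f0_branch p"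
proof -
  define \<beta> where "\<beta> = f0_branch p"
  have p: "p < 1/3" using assms m0_bounds by simp
  have "0 < \<beta>" unfolding \<beta>_def using assms(1) p by (rule f0_branch_pos)
  have quadratic: "\<beta> * (1 - 3*p)\<^sup>2 / 2 = (1 - 3*p) * log_ratio p / 3"
    using assms(1) p unfolding \<beta>_def f0_branch_def by (simp add: field_simps power2_eq_square)
  have "ln (3 * (1 - 2*p)) = ln 3 + ln (1 - 2*p)" "ln (3*p) = ln 3 + ln p"
    using assms(1) p by (intro ln_mult_pos; simp)+
  then have entropy: "(1 - 2*p) * ln (3 * (1 - 2*p)) + 2*p * ln (3*p) - (1 - 3*p) * log_ratio p / 3 = h_numer p"
    unfolding h_numer_def log_ratio_def by (simp add: field_simps)
  have "hbeta \<beta> = ((1 - 2*p) * ln (3 * (1 - 2*p)) + 2*p * ln (3*p) - \<beta> * (1 - 3*p)\<^sup>2 / 2) / \<beta>"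
    unfolding hbeta_def pbeta_f0_branch[OF assms, folded \<beta>_def] Fbeta_diagonal
    using \<open>0 < \<beta>\<close> by (simp add: field_simps)
  also have "\<dots> = h_numer p / \<beta>" using quadratic entropy by simp
  finally show ?thesis unfolding \<beta>_def .
qed

lemma h_numer_1_6: "h_numer (1/6) = 0"
proof -
  have "h_numer (1/6) = ln 3 + (1/2) * ln ((2/3) * (1/6))"
    unfolding h_numer_def by (subst ln_mult) (auto simp: algebra_simps)
  also have "ln ((2/3) * (1/6::real)) = - ln (3^2)" by (simp add: ln_div)
  also have "ln ((3::real)^2) = 2 * ln 3" by (subst ln_realpow) simp_all
  finally show ?thesis by simp
qed

lemma hbeta_sgn:
  assumes "beta3 < \<beta>" "\<beta> \<le> 2"
  shows "sgn (hbeta \<beta>) = sgn (f0_branch (1/6) - \<beta>)"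
proof -
  obtain t where t: "0 < t" "t < m0" "f0_branch t = \<beta>"
    using f0_branch_onto[OF assms] .
  have "0 < \<beta>" using t m0_bounds f0_branch_pos[of t] by simp
  have dom: "t \<in> {0<..m0}" "1/6 \<in> {0<..m0}" using t m0_bounds by auto
  have "sgn (hbeta \<beta>) = sgn (h_numer t - h_numer (1/6))"
    using hbeta_f0_branch[of t] t \<open>0 < \<beta>\<close> h_numer_1_6 by simp
  also have "\<dots> = sgn (t - 1/6)"
    using sgn_diff_strict_mono_on[OF h_numer_strict_mono dom] .
  also have "\<dots> = sgn (f0_branch (1/6) - \<beta>)"
    using sgn_diff_strict_antimono_on[OF f0_branch_strict_antimono dom] t by simp
  finally show ?thesis .
qed

theorem lemma4p3:
  shows "\<exists>\<beta>2. beta3 < \<beta>2 \<and> \<beta>2 < beta1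
          \<and> (\<forall>\<beta>. beta3 < \<beta> \<and> \<beta> < \<beta>2 \<longrightarrow> hbeta \<beta> > 0)
          \<and> hbeta \<beta>2 = 0
          \<and> (\<forall>\<beta>. \<beta>2 < \<beta> \<and> \<beta> < beta1 \<longrightarrow> hbeta \<beta> < 0)"
proof (intro exI[of _ "f0_branch (1/6)"] conjI allI impI)
  have "f0_branch m0 < f0_branch (1/6)"
    using monotone_onD[OF f0_branch_strict_antimono, of "1/6" m0] m0_bounds by simp
  then show beta3_less: "beta3 < f0_branch (1/6)" by (simp add: beta3_eq)
  show less_2: "f0_branch (1/6) < beta1"
    unfolding beta1_def f0_branch_1_6 using ln2_less_3_4 by simp
  show "hbeta (f0_branch (1/6)) = 0"
    using hbeta_sgn[of "f0_branch (1/6)"] beta3_less less_2 by (simp add: beta1_def sgn_0_0)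
  show "0 < hbeta \<beta>" if "beta3 < \<beta> \<and> \<beta> < f0_branch (1/6)" for \<beta>
    using hbeta_sgn[of \<beta>] that less_2 by (simp add: beta1_def sgn_1_pos)
  show "hbeta \<beta> < 0" if "f0_branch (1/6) < \<beta> \<and> \<beta> < beta1" for \<beta>
    using hbeta_sgn[of \<beta>] that beta3_less by (simp add: beta1_def sgn_1_neg)
qed

end
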